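(* Let $k$ be a positive integer and $p\geq 3$ a prime such that $p^{2}(p-1)\mid k$, and let $r\in\{1,\ldots,p-2\}$. Then there are infinitely many positive integers $n$ such that $$\nu_{p}\big(A_{p,k-r}(n)\big)\geq \nu_{p}(k).$$
   Context: For an integer $m\geq 2$ and a positive integer $k$, the integers $A_{m,k}(n)$, $n\in\mathbb{N}=\{0,1,2,\ldots\}$, are defined by the formal power series identity $\prod_{i=0}^{\infty}\big(1-x^{m^{i}}\big)^{-k}=\sum_{n=0}^{\infty}A_{m,k}(n)x^{n}$. For a prime $p$, $\nu_p(n)$ denotes the $p$-adic valuation of the integer $n$, with $\nu_p(0)=+\infty$. *)

theory Defs
  imports "HOL-Computational_Algebra.Computational_Algebra" "HOL-Library.Extended_Nat"
begin

text \<open>(1 - x^a)^(-1) = \<Sum>_j x^(a j) as an integer power series (a \<ge> 1).\<close>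
definition geom_inv :: "nat \<Rightarrow> int fps" where
  "geom_inv a = Abs_fps (\<lambda>j. if a dvd j then 1 else 0)"

definition partial_prod :: "nat \<Rightarrow> nat \<Rightarrow> int fps" where
  "partial_prod m N = (\<Prod>i<N. geom_inv (m ^ i))"

text \<open>A_{m,k}(n): coefficient of x^n in \<Prod>_{i\<ge>0} (1 - x^(m^i))^(-k).
  Since m \<ge> 2, the factors with i > n equal 1 modulo x^(n+1), so the
  coefficient of x^n of the infinite product equals that of the product over i \<le> n.\<close>
definition A :: "nat \<Rightarrow> nat \<Rightarrow> nat \<Rightarrow> int" where
  "A m k n = fps_nth ((partial_prod m (Suc n)) ^ k) n"

definition nu :: "nat \<Rightarrow> int \<Rightarrow> enat" where
  "nu p x = (if x = 0 then \<infinity> else enat (multiplicity (int p) x))"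

end

theory Submission
  imports Defs
begin

text \<open>Write \<open>v = \<nu>\<^sub>p(k)\<close>. Iterating \<open>(1 - x)^p \<equiv> 1 - x^p (mod p)\<close> and lifting the exponent
  gives \<open>(1 - x)^(p^v) \<equiv> (1 - x^p)^(p^(v-1)) (mod p^v)\<close>, so modulo \<open>p^v\<close> the factor \<open>(1 - x)^(-k)\<close>
  of the generating function of \<open>A\<^sub>p\<^sub>,\<^sub>k\<^sub>-\<^sub>r\<close> may be replaced by \<open>(1 - x^p)^(-k/p)\<close>. The generating
  function then becomes \<open>(1 - x)^r S(x)\<close> with \<open>S\<close> a power series in \<open>x^p\<close>; since \<open>r \<le> p - 2\<close>,
  its coefficients at all \<open>n \<equiv> -1 (mod p)\<close> vanish, so \<open>p^v\<close> divides \<open>A\<^sub>p\<^sub>,\<^sub>k\<^sub>-\<^sub>r(n)\<close> for all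
  these \<open>n\<close>.\<close>

lemma geom_inv_mult_one_minus_X_power:
  assumes "a \<ge> 1"
  shows "geom_inv a * (1 - fps_X ^ a) = 1"
proof (rule fps_ext)
  fix n
  have "geom_inv a * (1 - fps_X ^ a) = geom_inv a - fps_X ^ a * geom_inv a"
    by (simp add: algebra_simps)
  moreover have "(geom_inv a - fps_X ^ a * geom_inv a) $ n = (1 :: int fps) $ n"
  proof (cases "n < a")
    case True
    then show ?thesis using assms
      by (auto simp: geom_inv_def fps_X_power_mult_nth dest: dvd_imp_le)
  next
    case False
    then have "a dvd n \<longleftrightarrow> a dvd n - a"
      by (metis dvd_add_triv_right_iff le_add_diff_inverse2 not_less)
    then show ?thesis using assms False
      by (auto simp: geom_inv_def fps_X_power_mult_nth dest: dvd_imp_le)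
  qed
  ultimately show "(geom_inv a * (1 - fps_X ^ a)) $ n = (1 :: int fps) $ n"
    by simp
qed

definition fps_sparse :: "nat \<Rightarrow> 'a::semiring_1 fps \<Rightarrow> bool" where
  "fps_sparse p f \<longleftrightarrow> (\<forall>n. \<not> p dvd n \<longrightarrow> f $ n = 0)"

lemma fps_sparse_mult:
  assumes "fps_sparse p f" and "fps_sparse p g"
  shows "fps_sparse p (f * g)"
  unfolding fps_sparse_def
proof (intro allI impI)
  fix n
  assume n: "\<not> p dvd n"
  have "f $ i * g $ (n - i) = 0" if "i \<le> n" for i
  proof (cases "p dvd i")
    case True
    with n that have "\<not> p dvd n - i"
      using dvd_add by fastforce
    then show ?thesis using assms(2) by (simp add: fps_sparse_def)
  next
    case False
    then show ?thesis using assms(1) by (simp add: fps_sparse_def)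
  qed
  then show "(f * g) $ n = 0"
    unfolding fps_mult_nth by (intro sum.neutral) simp
qed

lemma fps_sparse_one: "fps_sparse p 1"
  by (auto simp: fps_sparse_def)

lemma fps_sparse_power: "fps_sparse p f \<Longrightarrow> fps_sparse p (f ^ n)"
  by (induction n) (auto intro: fps_sparse_mult fps_sparse_one)

lemma fps_sparse_prod:
  "(\<And>i. i \<in> I \<Longrightarrow> fps_sparse p (f i)) \<Longrightarrow> fps_sparse p (\<Prod>i\<in>I. f i)"
  by (induction I rule: infinite_finite_induct) (auto intro: fps_sparse_mult fps_sparse_one)

lemma fps_sparse_geom_inv: "p dvd a \<Longrightarrow> fps_sparse p (geom_inv a)"
  by (auto simp: fps_sparse_def geom_inv_def dest: dvd_trans)

lemma fps_sparse_one_minus_X_power: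
  "p dvd a \<Longrightarrow> fps_sparse p (1 - fps_X ^ a :: 'a::comm_ring_1 fps)"
  by (auto simp: fps_sparse_def fps_X_power_nth)

lemma fps_nth_one_minus_X_power_eq_0:
  "r < i \<Longrightarrow> ((1 - fps_X) ^ r :: 'a::comm_ring_1 fps) $ i = 0"
proof (induction r arbitrary: i)
  case 0
  then show ?case by simp
next
  case (Suc r)
  have expand: "((1 - fps_X) ^ Suc r :: 'a fps) = (1 - fps_X) ^ r - fps_X * (1 - fps_X) ^ r"
    by (simp add: algebra_simps)
  show ?case
    unfolding expand fps_sub_nth fps_X_mult_nth using Suc by simp
qed

lemma fps_mult_sparse_nth_eq_0:
  fixes f s :: "'a::semiring_1 fps"
  assumes f: "\<And>i. r < i \<Longrightarrow> f $ i = 0" and s: "fps_sparse p s" and n: "r < n mod p"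
  shows "(f * s) $ n = 0"
proof -
  have "f $ i * s $ (n - i) = 0" if "i \<le> n" for i
  proof (cases "r < i")
    case True
    then show ?thesis using f by simp
  next
    case False
    have "\<not> p dvd n - i"
    proof
      assume "p dvd n - i"
      then have "n mod p = i mod p"
        using \<open>i \<le> n\<close> by (simp add: mod_eq_dvd_iff_nat)
      also have "\<dots> \<le> i"
        by (rule mod_less_eq_dividend)
      finally show False using False n by simp
    qed
    then show ?thesis using s by (simp add: fps_sparse_def)
  qed
  then show ?thesis
    unfolding fps_mult_nth by (intro sum.neutral) simp
qed

lemma prime_mult_dvd_power_add_diff:
  fixes b c d :: "'a::comm_ring_1"
  assumes p: "prime p" and "d dvd c"
  shows "of_nat p * d dvd (c + b) ^ p - b ^ p - c ^ p"
proof -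
  have p1: "p > 1"
    using p prime_gt_1_nat by blast
  have "(c + b) ^ p = (\<Sum>i\<le>p. of_nat (p choose i) * c ^ i * b ^ (p - i))"
    by (rule binomial_ring)
  also have "{..p} = insert 0 (insert p {1..<p})"
    using p1 by auto
  also have "(\<Sum>i\<in>insert 0 (insert p {1..<p}). of_nat (p choose i) * c ^ i * b ^ (p - i))
      = b ^ p + (c ^ p + (\<Sum>i\<in>{1..<p}. of_nat (p choose i) * c ^ i * b ^ (p - i)))"
    using p1 by (subst sum.insert; simp)+
  finally have middle: "(c + b) ^ p - b ^ p - c ^ p
      = (\<Sum>i\<in>{1..<p}. of_nat (p choose i) * c ^ i * b ^ (p - i))"
    by (simp add: algebra_simps)
  have "of_nat p * d dvd of_nat (p choose i) * c ^ i * b ^ (p - i)" if i: "i \<in> {1..<p}" for i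
  proof -
    from i p have "p dvd p choose i"
      by (intro dvd_choose_prime) auto
    then obtain t where t: "p choose i = p * t" ..
    have "c ^ i = c * c ^ (i - 1)"
      using i by (cases i) auto
    then have "of_nat (p choose i) * c ^ i * b ^ (p - i)
        = (of_nat p * c) * (of_nat t * c ^ (i - 1) * b ^ (p - i))"
      by (simp add: t algebra_simps)
    moreover have "of_nat p * d dvd of_nat p * c"
      using \<open>d dvd c\<close> by (simp add: mult_dvd_mono)
    ultimately show ?thesis by simp
  qed
  then show ?thesis
    unfolding middle by (intro dvd_sum) auto
qed

lemma prime_power_dvd_diff_power_prime:
  fixes a b :: "'a::comm_ring_1"
  assumes p: "prime p" and "j \<ge> 1" and ab: "of_nat (p ^ j) dvd a - b"
  shows "of_nat (p ^ Suc j) dvd a ^ p - b ^ p"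
proof -
  have "of_nat p * of_nat (p ^ j) dvd ((a - b) + b) ^ p - b ^ p - (a - b) ^ p"
    by (rule prime_mult_dvd_power_add_diff[OF p ab])
  then have "of_nat (p ^ Suc j) dvd a ^ p - b ^ p - (a - b) ^ p"
    by simp
  moreover have "of_nat (p ^ Suc j) dvd (a - b) ^ p"
  proof -
    have "j * 2 \<le> j * p"
      using prime_ge_2_nat[OF p] by simp
    then have "Suc j \<le> j * p"
      using \<open>j \<ge> 1\<close> by linarith
    then have "p ^ Suc j dvd (p ^ j) ^ p"
      unfolding power_mult[symmetric] by (rule le_imp_power_dvd)
    then obtain t where "(p ^ j) ^ p = p ^ Suc j * t" ..
    then have "(of_nat (p ^ Suc j) :: 'a) dvd of_nat (p ^ j) ^ p"
      by (metis dvd_triv_left of_nat_mult of_nat_power)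
    also have "\<dots> dvd (a - b) ^ p"
      using ab by (rule dvd_power_same)
    finally show ?thesis .
  qed
  ultimately show ?thesis
    by (metis diff_add_cancel dvd_add)
qed

lemma prime_dvd_one_minus_X_power_prime:
  assumes p: "prime p"
  shows "of_nat p dvd (1 - fps_X :: 'a::comm_ring_1 fps) ^ p - (1 - fps_X ^ p)"
proof -
  have "of_nat p * 1 dvd (- fps_X + 1 :: 'a fps) ^ p - 1 ^ p - (- fps_X) ^ p"
    by (rule prime_mult_dvd_power_add_diff[OF p]) simp
  then have binomial: "of_nat p dvd (1 - fps_X :: 'a fps) ^ p - 1 - (- fps_X) ^ p"
    by simp
  have "of_nat p dvd (- fps_X) ^ p + (fps_X ^ p :: 'a fps)"
  proof (cases "odd p")
    case True
    then show ?thesis by (simp add: power_minus_odd)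
  next
    case False
    then have "\<not> p > 2"
      using prime_odd_nat[OF p] by blast
    then have "p = 2"
      using prime_ge_2_nat[OF p] by simp
    then show ?thesis by simp
  qed
  from dvd_add[OF binomial this] show ?thesis
    by (simp add: algebra_simps)
qed

lemma prime_power_dvd_one_minus_X_power:
  assumes p: "prime p"
  shows "of_nat (p ^ Suc v) dvd
    (1 - fps_X :: 'a::comm_ring_1 fps) ^ (p ^ Suc v) - (1 - fps_X ^ p) ^ (p ^ v)"
proof (induction v)
  case 0
  then show ?case
    using prime_dvd_one_minus_X_power_prime[OF p] by simp
next
  case (Suc v)
  from prime_power_dvd_diff_power_prime[OF p _ this]
  show ?case
    by (simp flip: power_mult add: power_Suc2 mult.commute)
qed

lemma dvd_power_diff_of_dvd_diff:
  fixes a b :: "'a::comm_ring_1"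
  shows "q dvd a - b \<Longrightarrow> q dvd a ^ n - b ^ n"
  by (simp add: power_diff_sumr2)

lemma dvd_diff_of_inverses:
  fixes a a' b b' :: "'a::comm_ring_1"
  assumes "a * a' = 1" and "b * b' = 1" and "q dvd a - b"
  shows "q dvd a' - b'"
proof -
  have "a' * b' * (b - a) = a' * (b * b') - b' * (a * a')"
    by (simp add: algebra_simps)
  also have "\<dots> = a' - b'"
    using assms(1,2) by simp
  finally have "a' - b' = a' * b' * (b - a)" ..
  moreover have "q dvd b - a"
    using assms(3) by (metis dvd_minus_iff minus_diff_eq)
  ultimately show ?thesis
    by simp
qed

lemma power_diff_of_inverse:
  fixes a b :: "'a::comm_monoid_mult"
  assumes "a * b = 1" and "r \<le> k"
  shows "a ^ (k - r) = a ^ k * b ^ r"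
proof -
  have "a ^ k = a ^ (k - r) * a ^ r"
    using assms(2) by (simp flip: power_add)
  then have "a ^ k * b ^ r = a ^ (k - r) * (a * b) ^ r"
    by (simp add: power_mult_distrib mult_ac)
  then show ?thesis
    using assms(1) by simp
qed

lemma geom_inv_power_cong:
  assumes p: "prime p"
  shows "of_nat (p ^ Suc v) dvd geom_inv 1 ^ (p ^ Suc v * u) - geom_inv p ^ (p ^ v * u)"
proof -
  have "(1 - fps_X) * geom_inv 1 = 1" and "(1 - fps_X ^ p) * geom_inv p = 1"
    using geom_inv_mult_one_minus_X_power[of 1] geom_inv_mult_one_minus_X_power[of p]
      prime_ge_1_nat[OF p] by (simp_all add: mult.commute)
  then have "(1 - fps_X) ^ (p ^ Suc v * u) * geom_inv 1 ^ (p ^ Suc v * u) = 1"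
    and "(1 - fps_X ^ p) ^ (p ^ v * u) * geom_inv p ^ (p ^ v * u) = 1"
    by (simp_all flip: power_mult_distrib)
  moreover have "of_nat (p ^ Suc v) dvd
      (1 - fps_X :: int fps) ^ (p ^ Suc v * u) - (1 - fps_X ^ p) ^ (p ^ v * u)"
    using dvd_power_diff_of_dvd_diff[OF prime_power_dvd_one_minus_X_power[OF p, of v], of u]
    by (simp add: power_mult)
  ultimately show ?thesis
    by (rule dvd_diff_of_inverses)
qed

lemma partial_prod_power_cong_sparse:
  assumes p: "prime p" and k: "p ^ Suc v dvd k" and "r \<le> k" and "N \<ge> 1"
  obtains s where "fps_sparse p s"
    and "of_nat (p ^ Suc v) dvd partial_prod p N ^ (k - r) - (1 - fps_X) ^ r * s"
proof -
  from k obtain u where u: "k = p ^ Suc v * u" ..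
  define F where "F = (\<Prod>i\<in>{1..<N}. geom_inv (p ^ i))"
  define E where "E = (\<Prod>i\<in>{1..<N}. 1 - fps_X ^ (p ^ i) :: int fps)"
  define s where "s = geom_inv p ^ (p ^ v * u) * F ^ k * E ^ r"
  have inverse_1: "geom_inv 1 * (1 - fps_X) = 1"
    using geom_inv_mult_one_minus_X_power[of 1] by simp
  have inverse_F: "F * E = 1"
    unfolding F_def E_def prod.distrib[symmetric]
    using prime_ge_1_nat[OF p] by (intro prod.neutral ballI geom_inv_mult_one_minus_X_power) simp
  have "{..<N} = insert 0 {1..<N}"
    using \<open>N \<ge> 1\<close> by auto
  then have "partial_prod p N = geom_inv 1 * F"
    by (simp add: partial_prod_def F_def)
  then have "partial_prod p N ^ (k - r) = geom_inv 1 ^ k * F ^ k * (1 - fps_X) ^ r * E ^ r"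
    using power_diff_of_inverse[OF inverse_1 \<open>r \<le> k\<close>]
      power_diff_of_inverse[OF inverse_F \<open>r \<le> k\<close>]
    by (simp add: power_mult_distrib mult_ac)
  then have "partial_prod p N ^ (k - r) - (1 - fps_X) ^ r * s
      = (geom_inv 1 ^ k - geom_inv p ^ (p ^ v * u)) * ((1 - fps_X) ^ r * F ^ k * E ^ r)"
    by (simp add: s_def algebra_simps)
  moreover have "of_nat (p ^ Suc v) dvd geom_inv 1 ^ k - geom_inv p ^ (p ^ v * u)"
    unfolding u by (rule geom_inv_power_cong[OF p])
  ultimately have "of_nat (p ^ Suc v) dvd partial_prod p N ^ (k - r) - (1 - fps_X) ^ r * s"
    by simp
  moreover have "fps_sparse p s"
    unfolding s_def F_def E_def
    by (intro fps_sparse_mult fps_sparse_power fps_sparse_prod fps_sparse_geom_inv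
        fps_sparse_one_minus_X_power) auto
  ultimately show ?thesis
    using that by blast
qed

lemma of_nat_dvd_imp_dvd_fps_nth:
  assumes "(of_nat q :: 'a::comm_semiring_1 fps) dvd f"
  shows "of_nat q dvd f $ n"
proof -
  from assms obtain h where "f = of_nat q * h" ..
  then show ?thesis
    by (simp flip: fps_of_nat)
qed

lemma prime_power_dvd_A:
  assumes p: "prime p" and "p ^ v dvd k" and "r \<le> k" and "r + 2 \<le> p"
    and n: "n mod p = p - 1"
  shows "int (p ^ v) dvd A p (k - r) n"
proof (cases v)
  case 0
  then show ?thesis by simp
next
  case (Suc w)
  have "p ^ Suc w dvd k" and "1 \<le> Suc n"
    using \<open>p ^ v dvd k\<close> Suc by simp_all
  then obtain s where "fps_sparse p s"
    and cong: "of_nat (p ^ Suc w) dvd partial_prod p (Suc n) ^ (k - r) - (1 - fps_X) ^ r * s"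
    using partial_prod_power_cong_sparse[OF p _ \<open>r \<le> k\<close>] by blast
  have "((1 - fps_X) ^ r * s) $ n = 0"
    using fps_nth_one_minus_X_power_eq_0 \<open>fps_sparse p s\<close> \<open>r + 2 \<le> p\<close> n
    by (intro fps_mult_sparse_nth_eq_0) auto
  with of_nat_dvd_imp_dvd_fps_nth[OF cong, of n] show ?thesis
    by (simp add: A_def Suc)
qed

lemma nu_ge_of_power_dvd:
  assumes "p > 1" and "int p ^ v dvd x"
  shows "enat v \<le> nu p x"
  using assms multiplicity_geI[of x "int p" v] by (simp add: nu_def)

lemma nu_le_nu_A:
  assumes "prime p" and "k > 0" and "r \<le> k" and "r + 2 \<le> p" and "n mod p = p - 1"
  shows "nu p (int k) \<le> nu p (A p (k - r) n)"
proof -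
  define v where "v = multiplicity (int p) (int k)"
  have "int p ^ v dvd int k"
    unfolding v_def by (rule multiplicity_dvd)
  then have "p ^ v dvd k"
    by (simp flip: of_nat_power)
  from prime_power_dvd_A[OF assms(1) this assms(3-5)]
  have "int p ^ v dvd A p (k - r) n"
    by (simp add: of_nat_power)
  then show ?thesis
    using nu_ge_of_power_dvd prime_gt_1_nat[OF assms(1)] assms(2) by (simp add: nu_def v_def)
qed

lemma infinite_mod_eq:
  fixes p c :: nat
  assumes "c < p"
  shows "infinite {n. n mod p = c}"
proof -
  have "inj (\<lambda>m. p * m + c)"
    using assms by (intro injI) simp
  then have "infinite (range (\<lambda>m. p * m + c))"
    by (rule range_inj_infinite)
  moreover have "range (\<lambda>m. p * m + c) \<subseteq> {n. n mod p = c}"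
    using assms by auto
  ultimately show ?thesis
    by (rule infinite_super[rotated])
qed

theorem theorem3p2:
  fixes p k r :: nat
  assumes "prime p" and "p \<ge> 3" and "k > 0"
    and "p^2 * (p - 1) dvd k"
    and "1 \<le> r" and "r \<le> p - 2"
  shows "infinite {n :: nat. n > 0 \<and> nu p (A p (k - r) n) \<ge> nu p (int k)}"
proof -
  have "p dvd p ^ 2 * (p - 1)"
    by simp
  then have "p dvd k"
    using assms(4) by (rule dvd_trans)
  then have "p \<le> k"
    using assms(3) by (rule dvd_imp_le)
  then have "r \<le> k"
    using assms(6) by linarith
  have "{n. n mod p = p - 1} \<subseteq> {n. n > 0 \<and> nu p (A p (k - r) n) \<ge> nu p (int k)}"
  proof (intro subsetI CollectI conjI)
    fix n
    assume n: "n \<in> {n. n mod p = p - 1}"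
    then show "n > 0"
      using assms(2) by (intro gr0I) auto
    show "nu p (int k) \<le> nu p (A p (k - r) n)"
      using nu_le_nu_A[OF assms(1,3) \<open>r \<le> k\<close> _] n assms(2,6) by simp
  qed
  moreover have "infinite {n. n mod p = p - 1}"
    using assms(2) by (intro infinite_mod_eq) simp
  ultimately show ?thesis
    by (rule infinite_super)
qed

end
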